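(* (a) $[0,1]^\mathbb{N}/c_0\equiv_B\mathbb{T}^\mathbb{N}/G_0$. (b) For every $1\le p<\infty$, $[0,1]^\mathbb{N}/\ell^p\equiv_B\mathbb{T}^\mathbb{N}/G_p$.
   Context: $\mathbb{T}=\{z\in\mathbb{C}:|z|=1\}$; $c_0$ is the space of real sequences converging to $0$; $\ell^p$ the real sequences with $\sum|\alpha_n|^p<\infty$. $G_0=\{(e^{i\alpha_n})_n:(\alpha_n)\in c_0\}$ and $G_p=\{(e^{i\alpha_n})_n:(\alpha_n)\in\ell^p\}$. $[0,1]^\mathbb{N}/c_0$ is the equivalence relation on $[0,1]^\mathbb{N}$ (product topology) given by $\alpha\sim\beta\iff\alpha-\beta\in c_0$; similarly $[0,1]^\mathbb{N}/\ell^p$ with $\ell^p$. $\mathbb{T}^\mathbb{N}/G$ is the equivalence relation on $\mathbb{T}^\mathbb{N}$ given by $z\sim w\iff zw^{-1}\in G$ (coordinatewise operations). For equivalence relations $E,F$ on Polish spaces $X,Y$, $E\le_B F$ means there is a Borel map $f:X\to Y$ with $xEy\iff f(x)Ff(y)$ for all $x,y$; $E\equiv_B F$ means $E\le_B F$ and $F\le_B E$. *)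

theory Defs
  imports "HOL-Analysis.Analysis"
begin

definition borel_reducible ::
  "'a::topological_space set \<Rightarrow> ('a \<Rightarrow> 'a \<Rightarrow> bool) \<Rightarrow>
   'b::topological_space set \<Rightarrow> ('b \<Rightarrow> 'b \<Rightarrow> bool) \<Rightarrow> bool" where
  "borel_reducible X E Y F \<longleftrightarrow>
     (\<exists>f. f \<in> measurable (restrict_space borel X) (restrict_space borel Y) \<and>
          (\<forall>x\<in>X. \<forall>y\<in>X. E x y \<longleftrightarrow> F (f x) (f y)))"

definition borel_bireducible ::
  "'a::topological_space set \<Rightarrow> ('a \<Rightarrow> 'a \<Rightarrow> bool) \<Rightarrow>
   'b::topological_space set \<Rightarrow> ('b \<Rightarrow> 'b \<Rightarrow> bool) \<Rightarrow> bool" where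
  "borel_bireducible X E Y F \<longleftrightarrow> borel_reducible X E Y F \<and> borel_reducible Y F X E"

definition cube :: "(nat \<Rightarrow> real) set" where
  "cube = {\<alpha>. \<forall>n. \<alpha> n \<in> {0..1}}"

definition torusN :: "(nat \<Rightarrow> complex) set" where
  "torusN = {z. \<forall>n. norm (z n) = 1}"

definition c0 :: "(nat \<Rightarrow> real) set" where
  "c0 = {\<alpha>. \<alpha> \<longlonglongrightarrow> 0}"

definition lp :: "real \<Rightarrow> (nat \<Rightarrow> real) set" where
  "lp p = {\<alpha>. summable (\<lambda>n. \<bar>\<alpha> n\<bar> powr p)}"

definition exp_group :: "(nat \<Rightarrow> real) set \<Rightarrow> (nat \<Rightarrow> complex) set" where
  "exp_group S = {z. \<exists>\<alpha>\<in>S. z = (\<lambda>n. exp (\<i> * complex_of_real (\<alpha> n)))}"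

definition G0 :: "(nat \<Rightarrow> complex) set" where
  "G0 = exp_group c0"

definition Gp :: "real \<Rightarrow> (nat \<Rightarrow> complex) set" where
  "Gp p = exp_group (lp p)"

definition real_coset_rel :: "(nat \<Rightarrow> real) set \<Rightarrow> (nat \<Rightarrow> real) \<Rightarrow> (nat \<Rightarrow> real) \<Rightarrow> bool" where
  "real_coset_rel S \<alpha> \<beta> \<longleftrightarrow> (\<lambda>n. \<alpha> n - \<beta> n) \<in> S"

definition torus_coset_rel :: "(nat \<Rightarrow> complex) set \<Rightarrow> (nat \<Rightarrow> complex) \<Rightarrow> (nat \<Rightarrow> complex) \<Rightarrow> bool" where
  "torus_coset_rel G z w \<longleftrightarrow> (\<lambda>n. z n * inverse (w n)) \<in> G"

end

theory Submission
  imports Defs "HOL-Probability.Characteristic_Functions"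
begin

(* Both c_0 and l^p (p >= 1) are "solid sequence ideals": sets S of real
   sequences closed under addition, under passing to a sequence dominated by a constant
   multiple of a member, and such that a sequence lies in S iff its even and odd
   subsequences do.  For every such S we give two continuous reductions:
   - alpha |-> (exp (i pi alpha_n))_n from the cube to the torus power, and
   - z |-> the interleaving of ((1 + Re z_n)/2)_n and ((1 + Im z_n)/2)_n back to the cube.
   Both rest on the chord estimates  |t|/pi <= |exp(i t) - 1| <= |t|  for |t| <= pi,
   which show that a sequence u on the circle lies in exp_group S iff (|u_n - 1|)_n is in S. *)

text \<open>These are the only properties of c_0 and l^p that the reductions use.\<close>

definition solid_seq_ideal :: "(nat \<Rightarrow> real) set \<Rightarrow> bool" where
  "solid_seq_ideal S \<longleftrightarrow>
    (\<forall>a b C. 0 \<le> C \<longrightarrow> (\<forall>n. \<bar>a n\<bar> \<le> C * \<bar>b n\<bar>) \<longrightarrow> b \<in> S \<longrightarrow> a \<in> S) \<and>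
    (\<forall>a b. a \<in> S \<longrightarrow> b \<in> S \<longrightarrow> (\<lambda>n. a n + b n) \<in> S) \<and>
    (\<forall>c. c \<in> S \<longleftrightarrow> (\<lambda>n. c (2*n)) \<in> S \<and> (\<lambda>n. c (2*n+1)) \<in> S)"

lemma solid_seq_idealI:
  assumes "\<And>a b C. 0 \<le> C \<Longrightarrow> (\<And>n. \<bar>a n\<bar> \<le> C * \<bar>b n\<bar>) \<Longrightarrow> b \<in> S \<Longrightarrow> a \<in> S"
    and "\<And>a b. a \<in> S \<Longrightarrow> b \<in> S \<Longrightarrow> (\<lambda>n. a n + b n) \<in> S"
    and "\<And>c. c \<in> S \<longleftrightarrow> (\<lambda>n. c (2*n)) \<in> S \<and> (\<lambda>n. c (2*n+1)) \<in> S"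
  shows "solid_seq_ideal S"
  using assms unfolding solid_seq_ideal_def by blast

lemma ideal_dominated:
  "solid_seq_ideal S \<Longrightarrow> b \<in> S \<Longrightarrow> 0 \<le> C \<Longrightarrow> (\<And>n. \<bar>a n\<bar> \<le> C * \<bar>b n\<bar>) \<Longrightarrow> a \<in> S"
  unfolding solid_seq_ideal_def by blast

lemma ideal_add: "solid_seq_ideal S \<Longrightarrow> a \<in> S \<Longrightarrow> b \<in> S \<Longrightarrow> (\<lambda>n. a n + b n) \<in> S"
  unfolding solid_seq_ideal_def by blast

lemma ideal_interleave:
  "solid_seq_ideal S \<Longrightarrow> c \<in> S \<longleftrightarrow> (\<lambda>n. c (2*n)) \<in> S \<and> (\<lambda>n. c (2*n+1)) \<in> S"
  unfolding solid_seq_ideal_def by blast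

lemma ideal_comparable:
  assumes "solid_seq_ideal S" and "0 \<le> C" and "0 \<le> D"
    and "\<And>n. \<bar>a n\<bar> \<le> C * \<bar>b n\<bar>" and "\<And>n. \<bar>b n\<bar> \<le> D * \<bar>a n\<bar>"
  shows "a \<in> S \<longleftrightarrow> b \<in> S"
proof
  assume "b \<in> S"
  then show "a \<in> S" by (rule ideal_dominated[OF assms(1) _ assms(2)]) (rule assms(4))
next
  assume "a \<in> S"
  then show "b \<in> S" by (rule ideal_dominated[OF assms(1) _ assms(3)]) (rule assms(5))
qed

lemma ideal_scale:
  assumes "solid_seq_ideal S" and "c \<noteq> 0"
  shows "(\<lambda>n. c * a n) \<in> S \<longleftrightarrow> a \<in> S"
  by (rule ideal_comparable[OF assms(1), of "\<bar>c\<bar>" "1 / \<bar>c\<bar>"])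
     (use assms(2) in \<open>auto simp: abs_mult\<close>)

lemma ideal_pair:
  assumes S: "solid_seq_ideal S"
  shows "a \<in> S \<and> b \<in> S \<longleftrightarrow> (\<lambda>n. \<bar>a n\<bar> + \<bar>b n\<bar>) \<in> S"
proof
  assume "a \<in> S \<and> b \<in> S"
  then have "(\<lambda>n. \<bar>a n\<bar>) \<in> S" "(\<lambda>n. \<bar>b n\<bar>) \<in> S"
    using ideal_dominated[OF S, of a 1 "\<lambda>n. \<bar>a n\<bar>"] ideal_dominated[OF S, of b 1 "\<lambda>n. \<bar>b n\<bar>"]
    by auto
  then show "(\<lambda>n. \<bar>a n\<bar> + \<bar>b n\<bar>) \<in> S" by (rule ideal_add[OF S])
next
  assume sum: "(\<lambda>n. \<bar>a n\<bar> + \<bar>b n\<bar>) \<in> S"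
  show "a \<in> S \<and> b \<in> S"
    using ideal_dominated[OF S sum, of 1 a] ideal_dominated[OF S sum, of 1 b] by auto
qed

lemma solid_seq_ideal_c0: "solid_seq_ideal c0"
proof (rule solid_seq_idealI)
  fix a b :: "nat \<Rightarrow> real" and C :: real
  assume dom: "\<And>n. \<bar>a n\<bar> \<le> C * \<bar>b n\<bar>" and b: "b \<in> c0"
  have "\<forall>\<^sub>F n in sequentially. norm (a n) \<le> C * \<bar>b n\<bar>"
    using dom by simp
  moreover have "b \<longlonglongrightarrow> 0" using b by (simp add: c0_def)
  then have "(\<lambda>n. C * \<bar>b n\<bar>) \<longlonglongrightarrow> 0" by (intro tendsto_mult_right_zero tendsto_rabs_zero)
  ultimately have "a \<longlonglongrightarrow> 0" by (rule Lim_null_comparison)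
  then show "a \<in> c0" by (simp add: c0_def)
next
  fix a b :: "nat \<Rightarrow> real"
  assume "a \<in> c0" "b \<in> c0"
  then have "(\<lambda>n. a n + b n) \<longlonglongrightarrow> 0 + 0" by (intro tendsto_add) (simp_all add: c0_def)
  then show "(\<lambda>n. a n + b n) \<in> c0" by (simp add: c0_def)
next
  fix c :: "nat \<Rightarrow> real"
  have mono: "strict_mono (\<lambda>n::nat. 2*n)" "strict_mono (\<lambda>n::nat. 2*n+1)"
    by (auto simp: strict_mono_def)
  show "c \<in> c0 \<longleftrightarrow> (\<lambda>n. c (2*n)) \<in> c0 \<and> (\<lambda>n. c (2*n+1)) \<in> c0"
  proof
    assume "c \<in> c0"
    then have "c \<longlonglongrightarrow> 0" by (simp add: c0_def)
    then show "(\<lambda>n. c (2*n)) \<in> c0 \<and> (\<lambda>n. c (2*n+1)) \<in> c0"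
      using LIMSEQ_subseq_LIMSEQ[OF _ mono(1), of c 0] LIMSEQ_subseq_LIMSEQ[OF _ mono(2), of c 0]
      by (simp add: c0_def comp_def)
  next
    assume "(\<lambda>n. c (2*n)) \<in> c0 \<and> (\<lambda>n. c (2*n+1)) \<in> c0"
    then have "c \<longlonglongrightarrow> 0" by (intro limseq_even_odd[of c 0]) (simp_all add: c0_def)
    then show "c \<in> c0" by (simp add: c0_def)
  qed
qed

lemma summable_even_odd_iff:
  fixes g :: "nat \<Rightarrow> real"
  assumes nonneg: "\<And>n. 0 \<le> g n"
  shows "summable g \<longleftrightarrow> summable (\<lambda>n. g (2*n)) \<and> summable (\<lambda>n. g (2*n+1))"
proof -
  define ev where "ev k = (if even k then g k else 0)" for k
  define od where "od k = (if odd k then g k else 0)" for k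
  have "summable (\<lambda>n. g (2*n)) \<longleftrightarrow> summable ev"
    by (subst summable_mono_reindex[symmetric, of "\<lambda>n. 2*n"])
       (auto simp: ev_def strict_mono_def elim!: evenE)
  moreover have "summable (\<lambda>n. g (2*n+1)) \<longleftrightarrow> summable od"
    by (subst summable_mono_reindex[symmetric, of "\<lambda>n. 2*n+1"])
       (auto simp: od_def strict_mono_def elim!: oddE)
  moreover have "summable g \<longleftrightarrow> summable ev \<and> summable od"
  proof
    assume "summable g"
    then show "summable ev \<and> summable od"
      by (auto intro!: summable_comparison_test'[where g=g and N=0] simp: ev_def od_def nonneg)
  next
    assume "summable ev \<and> summable od"
    then have "summable (\<lambda>n. ev n + od n)" by (auto intro: summable_add)
    moreover have "(\<lambda>n. ev n + od n) = g" by (auto simp: ev_def od_def)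
    ultimately show "summable g" by simp
  qed
  ultimately show ?thesis by simp
qed

text \<open>The quasi-triangle inequality that makes l^p closed under addition.\<close>

lemma powr_abs_add_le:
  fixes x y p :: real
  assumes "0 \<le> p"
  shows "\<bar>x + y\<bar> powr p \<le> 2 powr p * (\<bar>x\<bar> powr p + \<bar>y\<bar> powr p)"
proof -
  have "\<bar>x + y\<bar> powr p \<le> (2 * max \<bar>x\<bar> \<bar>y\<bar>) powr p"
    by (intro powr_mono2) (use assms in auto)
  also have "\<dots> = 2 powr p * max \<bar>x\<bar> \<bar>y\<bar> powr p" by (simp add: powr_mult)
  also have "max \<bar>x\<bar> \<bar>y\<bar> powr p \<le> \<bar>x\<bar> powr p + \<bar>y\<bar> powr p"
    by (cases "\<bar>x\<bar> \<le> \<bar>y\<bar>") (auto simp: max_def)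
  finally show ?thesis by (simp add: mult_left_mono)
qed

lemma solid_seq_ideal_lp:
  assumes p: "0 < p"
  shows "solid_seq_ideal (lp p)"
proof (rule solid_seq_idealI)
  fix a b :: "nat \<Rightarrow> real" and C :: real
  assume C: "0 \<le> C" and dom: "\<And>n. \<bar>a n\<bar> \<le> C * \<bar>b n\<bar>" and b: "b \<in> lp p"
  have "summable (\<lambda>n. C powr p * \<bar>b n\<bar> powr p)"
    using b by (auto simp: lp_def intro: summable_mult)
  moreover have "norm (\<bar>a n\<bar> powr p) \<le> C powr p * \<bar>b n\<bar> powr p" for n
  proof -
    have "\<bar>a n\<bar> powr p \<le> (C * \<bar>b n\<bar>) powr p" by (intro powr_mono2) (use dom p in auto)
    then show ?thesis using C by (simp add: powr_mult)
  qed
  ultimately have "summable (\<lambda>n. \<bar>a n\<bar> powr p)"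
    by (rule summable_comparison_test'[where N=0])
  then show "a \<in> lp p" by (simp add: lp_def)
next
  fix a b :: "nat \<Rightarrow> real"
  assume "a \<in> lp p" "b \<in> lp p"
  then have "summable (\<lambda>n. 2 powr p * (\<bar>a n\<bar> powr p + \<bar>b n\<bar> powr p))"
    by (auto simp: lp_def intro: summable_mult summable_add)
  moreover have "norm (\<bar>a n + b n\<bar> powr p) \<le> 2 powr p * (\<bar>a n\<bar> powr p + \<bar>b n\<bar> powr p)" for n
    using powr_abs_add_le p by simp
  ultimately have "summable (\<lambda>n. \<bar>a n + b n\<bar> powr p)"
    by (rule summable_comparison_test'[where N=0])
  then show "(\<lambda>n. a n + b n) \<in> lp p" by (simp add: lp_def)
next
  fix c :: "nat \<Rightarrow> real"
  show "c \<in> lp p \<longleftrightarrow> (\<lambda>n. c (2*n)) \<in> lp p \<and> (\<lambda>n. c (2*n+1)) \<in> lp p"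
    using summable_even_odd_iff[of "\<lambda>n. \<bar>c n\<bar> powr p"] by (simp add: lp_def)
qed

text \<open>The chord from 1 to exp(i t) has length
  2 |sin (t/2)|; it is bounded above by the arc length |t| and, for |t| <= pi, below by
  |t| / pi.  The lower bound needs a crude Jordan-type inequality for the sine.\<close>

lemma sin_ge_half_arg:
  assumes "0 \<le> x" "x \<le> pi/3"
  shows "x/2 \<le> sin x"
proof -
  have "(\<lambda>t. sin t - t/2) 0 \<le> (\<lambda>t. sin t - t/2) x"
  proof (rule DERIV_nonneg_imp_nondecreasing[OF assms(1)])
    fix y assume y: "0 \<le> y" "y \<le> x"
    have "cos (pi/3) \<le> cos y" using y assms by (subst cos_mono_le_eq) auto
    then have "0 \<le> cos y - 1/2" by (simp add: cos_60)
    moreover have "DERIV (\<lambda>t. sin t - t/2) y :> cos y - 1/2"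
      by (auto intro!: derivative_eq_intros)
    ultimately show "\<exists>d. DERIV (\<lambda>t. sin t - t/2) y :> d \<and> 0 \<le> d" by blast
  qed
  then show ?thesis by simp
qed

lemma chord_length: "cmod (exp (\<i> * complex_of_real t) - 1) = 2 * \<bar>sin (t/2)\<bar>"
proof (rule power2_eq_imp_eq)
  have e: "exp (\<i> * complex_of_real t) = Complex (cos t) (sin t)"
    by (simp add: exp_Euler complex_eq_iff cos_of_real sin_of_real)
  have "(cmod (exp (\<i> * complex_of_real t) - 1))\<^sup>2 = (cos t - 1)\<^sup>2 + (sin t)\<^sup>2"
    by (simp add: e cmod_power2)
  also have "\<dots> = 2 - 2 * cos t" by (simp add: power2_eq_square algebra_simps sin_squared_eq)
  also have "\<dots> = (2 * \<bar>sin (t/2)\<bar>)\<^sup>2" using cos_double_sin[of "t/2"] by (simp add: power_mult_distrib)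
  finally show "(cmod (exp (\<i> * complex_of_real t) - 1))\<^sup>2 = (2 * \<bar>sin (t/2)\<bar>)\<^sup>2" .
qed auto

lemma chord_le_arc: "cmod (exp (\<i> * complex_of_real t) - 1) \<le> \<bar>t\<bar>"
  using abs_sin_x_le_abs_x[of "t/2"] by (simp add: chord_length)

lemma arc_le_pi_chord:
  assumes t: "\<bar>t\<bar> \<le> pi"
  shows "\<bar>t\<bar> \<le> pi * cmod (exp (\<i> * complex_of_real t) - 1)"
proof -
  define x where "x = \<bar>t\<bar> / 2"
  have x: "0 \<le> x" "x \<le> pi/2" using t by (auto simp: x_def)
  have "\<bar>sin (t/2)\<bar> = sin x"
    using sin_ge_zero[of "t/2"] sin_ge_zero[of "-t/2"] t by (cases "0 \<le> t") (auto simp: x_def)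
  then have chord: "cmod (exp (\<i> * complex_of_real t) - 1) = 2 * sin x"
    by (simp add: chord_length)
  show ?thesis
  proof (cases "x \<le> pi/3")
    case True
    then have "\<bar>t\<bar> \<le> 2 * cmod (exp (\<i> * complex_of_real t) - 1)"
      using sin_ge_half_arg[OF x(1)] by (simp add: chord x_def)
    also have "\<dots> \<le> pi * cmod (exp (\<i> * complex_of_real t) - 1)"
      using pi_gt3 by (intro mult_right_mono) auto
    finally show ?thesis .
  next
    case False
    then have "sin (pi/6) \<le> sin x"
      using x by (subst sin_mono_le_eq) auto
    then have "1 \<le> cmod (exp (\<i> * complex_of_real t) - 1)" by (simp add: chord sin_30)
    then have "pi * 1 \<le> pi * cmod (exp (\<i> * complex_of_real t) - 1)"
      by (intro mult_left_mono) auto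
    then show ?thesis using t by linarith
  qed
qed

lemma unit_eq_exp_Arg: "cmod u = 1 \<Longrightarrow> u = exp (\<i> * complex_of_real (Arg u))"
  using Arg_eq[of u] by force

lemma abs_Arg_le_pi_chord: "cmod u = 1 \<Longrightarrow> \<bar>Arg u\<bar> \<le> pi * cmod (u - 1)"
  using arc_le_pi_chord[of "Arg u"] unit_eq_exp_Arg[of u] mpi_less_Arg[of u] Arg_le_pi[of u]
  by auto

text \<open>Key lemma: a sequence on the circle lies in exp_group S iff its distances to 1 form a
  sequence in S.  Lifting uses the principal arguments, which are comparable to the chords.\<close>

lemma exp_group_iff_chords:
  assumes S: "solid_seq_ideal S" and unit: "\<And>n. cmod (u n) = 1"
  shows "u \<in> exp_group S \<longleftrightarrow> (\<lambda>n. cmod (u n - 1)) \<in> S"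
proof
  assume "u \<in> exp_group S"
  then obtain \<gamma> where \<gamma>: "\<gamma> \<in> S" and u: "u = (\<lambda>n. exp (\<i> * complex_of_real (\<gamma> n)))"
    by (auto simp: exp_group_def)
  have "\<bar>cmod (u n - 1)\<bar> \<le> 1 * \<bar>\<gamma> n\<bar>" for n
    by (simp add: u chord_le_arc)
  then show "(\<lambda>n. cmod (u n - 1)) \<in> S"
    by (rule ideal_dominated[OF S \<gamma>, rotated]) simp
next
  assume chords: "(\<lambda>n. cmod (u n - 1)) \<in> S"
  have "\<bar>Arg (u n)\<bar> \<le> pi * \<bar>cmod (u n - 1)\<bar>" for n
    by (simp add: abs_Arg_le_pi_chord unit)
  then have "(\<lambda>n. Arg (u n)) \<in> S"
    by (rule ideal_dominated[OF S chords, rotated]) simp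
  moreover have "u = (\<lambda>n. exp (\<i> * complex_of_real (Arg (u n))))"
    using unit_eq_exp_Arg unit by auto
  ultimately show "u \<in> exp_group S" by (auto simp: exp_group_def)
qed

text \<open>Coordinate differences lie in [-1,1], so the angle
  differences pi (alpha_n - beta_n) lie in [-pi,pi], where the chord estimates apply.\<close>

definition circle_embedding :: "(nat \<Rightarrow> real) \<Rightarrow> nat \<Rightarrow> complex" where
  "circle_embedding \<alpha> n = exp (\<i> * complex_of_real (pi * \<alpha> n))"

lemma circle_embedding_reduction:
  assumes S: "solid_seq_ideal S" and \<alpha>: "\<alpha> \<in> cube" and \<beta>: "\<beta> \<in> cube"
  shows "real_coset_rel S \<alpha> \<beta> \<longleftrightarrow>
         torus_coset_rel (exp_group S) (circle_embedding \<alpha>) (circle_embedding \<beta>)"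
proof -
  define d where "d n = \<alpha> n - \<beta> n" for n
  define q where "q n = exp (\<i> * complex_of_real (pi * d n))" for n
  have d_bound: "\<bar>pi * d n\<bar> \<le> pi" for n
  proof -
    have "0 \<le> \<alpha> n" "\<alpha> n \<le> 1" "0 \<le> \<beta> n" "\<beta> n \<le> 1"
      using \<alpha> \<beta> by (auto simp: cube_def)
    then have "\<bar>d n\<bar> \<le> 1" by (simp add: d_def abs_le_iff)
    then show ?thesis by (simp add: abs_mult)
  qed
  have quotient: "(\<lambda>n. circle_embedding \<alpha> n * inverse (circle_embedding \<beta> n)) = q"
    by (auto simp: circle_embedding_def q_def d_def exp_minus[symmetric] exp_add[symmetric] algebra_simps)
  have "torus_coset_rel (exp_group S) (circle_embedding \<alpha>) (circle_embedding \<beta>) \<longleftrightarrow> q \<in> exp_group S"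
    by (simp add: torus_coset_rel_def quotient)
  also have "\<dots> \<longleftrightarrow> (\<lambda>n. cmod (q n - 1)) \<in> S"
    by (rule exp_group_iff_chords[OF S]) (simp add: q_def)
  also have "\<dots> \<longleftrightarrow> d \<in> S"
  proof (rule ideal_comparable[OF S, of pi 1])
    show "\<bar>cmod (q n - 1)\<bar> \<le> pi * \<bar>d n\<bar>" for n
      using chord_le_arc[of "pi * d n"] by (simp add: q_def abs_mult)
    show "\<bar>d n\<bar> \<le> 1 * \<bar>cmod (q n - 1)\<bar>" for n
      using arc_le_pi_chord[OF d_bound[of n]] by (simp add: q_def abs_mult)
  qed simp_all
  finally show ?thesis by (simp add: real_coset_rel_def d_def[abs_def])
qed

definition cube_embedding :: "(nat \<Rightarrow> complex) \<Rightarrow> nat \<Rightarrow> real" where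
  "cube_embedding z k =
     (if even k then (1 + Re (z (k div 2))) / 2 else (1 + Im (z (k div 2))) / 2)"

lemma cube_embedding_reduction:
  assumes S: "solid_seq_ideal S" and z: "z \<in> torusN" and w: "w \<in> torusN"
  shows "torus_coset_rel (exp_group S) z w \<longleftrightarrow>
         real_coset_rel S (cube_embedding z) (cube_embedding w)"
proof -
  define u where "u n = z n * inverse (w n)" for n
  define v where "v n = z n - w n" for n
  have nz: "cmod (z n) = 1" and nw: "cmod (w n) = 1" for n
    using z w by (auto simp: torusN_def)
  have u_unit: "cmod (u n) = 1" for n by (simp add: u_def norm_mult norm_inverse nz nw)
  have u_chord: "cmod (u n - 1) = cmod (v n)" for n
  proof -
    have "w n \<noteq> 0" using nw[of n] by auto
    then have "u n - 1 = v n * inverse (w n)" by (simp add: u_def v_def field_simps)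
    then show ?thesis by (simp add: norm_mult norm_inverse nw)
  qed
  have "torus_coset_rel (exp_group S) z w \<longleftrightarrow> u \<in> exp_group S"
    by (simp add: torus_coset_rel_def u_def[abs_def])
  also have "\<dots> \<longleftrightarrow> (\<lambda>n. cmod (v n)) \<in> S"
    using exp_group_iff_chords[OF S u_unit] by (simp add: u_chord)
  also have "\<dots> \<longleftrightarrow> (\<lambda>n. \<bar>Re (v n)\<bar> + \<bar>Im (v n)\<bar>) \<in> S"
  proof (rule ideal_comparable[OF S, of 1 2])
    show "\<bar>cmod (v n)\<bar> \<le> 1 * \<bar>\<bar>Re (v n)\<bar> + \<bar>Im (v n)\<bar>\<bar>" for n
      using cmod_le[of "v n"] by simp
    show "\<bar>\<bar>Re (v n)\<bar> + \<bar>Im (v n)\<bar>\<bar> \<le> 2 * \<bar>cmod (v n)\<bar>" for n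
      using abs_Re_le_cmod[of "v n"] abs_Im_le_cmod[of "v n"] by simp
  qed simp_all
  also have "\<dots> \<longleftrightarrow> (\<lambda>n. Re (v n)) \<in> S \<and> (\<lambda>n. Im (v n)) \<in> S"
    by (rule ideal_pair[OF S, symmetric])
  also have "\<dots> \<longleftrightarrow> (\<lambda>n. 1/2 * Re (v n)) \<in> S \<and> (\<lambda>n. 1/2 * Im (v n)) \<in> S"
    using ideal_scale[OF S, of "1/2"] by simp
  also have "\<dots> \<longleftrightarrow> (\<lambda>k. cube_embedding z k - cube_embedding w k) \<in> S"
  proof -
    have "(\<lambda>n. cube_embedding z (2*n) - cube_embedding w (2*n)) = (\<lambda>n. 1/2 * Re (v n))"
      "(\<lambda>n. cube_embedding z (2*n+1) - cube_embedding w (2*n+1)) = (\<lambda>n. 1/2 * Im (v n))"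
      by (auto simp: cube_embedding_def v_def field_simps)
    then show ?thesis
      using ideal_interleave[OF S, of "\<lambda>k. cube_embedding z k - cube_embedding w k"] by simp
  qed
  finally show ?thesis by (simp add: real_coset_rel_def)
qed

lemma continuous_on_measurable_restrict:
  assumes "continuous_on X f" and "f ` X \<subseteq> Y"
  shows "f \<in> measurable (restrict_space borel X) (restrict_space borel Y)"
  using assms by (auto intro!: measurable_restrict_space2 borel_measurable_continuous_on_restrict
      simp: space_restrict_space)

lemma circle_embedding_measurable:
  "circle_embedding \<in> measurable (restrict_space borel cube) (restrict_space borel torusN)"
proof (rule continuous_on_measurable_restrict)
  have "continuous_on UNIV circle_embedding"
    unfolding circle_embedding_def[abs_def]
    by (intro continuous_on_coordinatewise_then_product continuous_intros
          continuous_on_product_then_coordinatewise[OF continuous_on_id])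
  then show "continuous_on cube circle_embedding" by (rule continuous_on_subset) simp
  show "circle_embedding ` cube \<subseteq> torusN"
    by (auto simp: circle_embedding_def torusN_def)
qed

lemma cube_embedding_measurable:
  "cube_embedding \<in> measurable (restrict_space borel torusN) (restrict_space borel cube)"
proof (rule continuous_on_measurable_restrict)
  have "continuous_on UNIV cube_embedding"
    unfolding cube_embedding_def[abs_def]
  proof (intro continuous_on_coordinatewise_then_product)
    fix k :: nat
    show "continuous_on UNIV
        (\<lambda>z. if even k then (1 + Re (z (k div 2))) / 2 else (1 + Im (z (k div 2))) / 2)"
      by (cases "even k") (auto intro!: continuous_intros
          continuous_on_product_then_coordinatewise[OF continuous_on_id])
  qed
  then show "continuous_on torusN cube_embedding" by (rule continuous_on_subset) simp
  show "cube_embedding ` torusN \<subseteq> cube"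
  proof (clarsimp simp: cube_def)
    fix z k assume "z \<in> torusN"
    then have unit: "cmod (z (k div 2)) = 1" by (simp add: torusN_def)
    have "\<bar>Re (z (k div 2))\<bar> \<le> 1" "\<bar>Im (z (k div 2))\<bar> \<le> 1"
      using abs_Re_le_cmod[of "z (k div 2)"] abs_Im_le_cmod[of "z (k div 2)"] unit by simp_all
    then show "0 \<le> cube_embedding z k \<and> cube_embedding z k \<le> 1"
      by (simp add: cube_embedding_def abs_le_iff)
  qed
qed

lemma borel_bireducible_exp_group:
  assumes "solid_seq_ideal S"
  shows "borel_bireducible cube (real_coset_rel S) torusN (torus_coset_rel (exp_group S))"
  unfolding borel_bireducible_def borel_reducible_def
  using circle_embedding_measurable cube_embedding_measurable
    circle_embedding_reduction[OF assms] cube_embedding_reduction[OF assms]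
  by blast

theorem mainTheorem3:
  shows "borel_bireducible cube (real_coset_rel c0) torusN (torus_coset_rel G0) \<and>
         (\<forall>p::real. 1 \<le> p \<longrightarrow>
           borel_bireducible cube (real_coset_rel (lp p)) torusN (torus_coset_rel (Gp p)))"
proof (intro conjI allI impI)
  show "borel_bireducible cube (real_coset_rel c0) torusN (torus_coset_rel G0)"
    unfolding G0_def by (rule borel_bireducible_exp_group[OF solid_seq_ideal_c0])
next
  fix p :: real assume "1 \<le> p"
  then show "borel_bireducible cube (real_coset_rel (lp p)) torusN (torus_coset_rel (Gp p))"
    unfolding Gp_def by (intro borel_bireducible_exp_group solid_seq_ideal_lp) simp
qed

end
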